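(* Let $X$ be a locally compact Polish space with compatible metric $d$. Suppose there are a closed discrete sequence $(x_n)_{n\in\mathbb N}$ of distinct points of $X$ and pairwise disjoint open sets $U_n\ni x_n$ such that each $U_n$ is a topological manifold of positive dimension. Then $(X,d)$ is flexible. In particular, every noncompact, second-countable topological manifold of positive dimension, with any compatible metric, is flexible.
   Context: For closed $Y\subseteq X$, $\partial_X Y=Y\cap\overline{X\setminus Y}$ and $\mathrm{Homeo}_{\partial}(Y)$ is the group of homeomorphisms of $Y$ fixing each point of $\partial_X Y$; such $\phi$ extends to a homeomorphism $\tilde\phi$ of $X$ equal to the identity off $Y$, and its radius is $r(\phi)=\sup_{x\in X}d(x,\tilde\phi(x))$. A locally compact noncompact Polish space $X$ with compatible metric $d$ is flexible if there are pairwise disjoint sets $Y_n\subseteq X$ and $\phi_{n,m}\in\mathrm{Homeo}_\partial(Y_n)$ ($n,m\in\mathbb N$) such that: (1) each $Y_n$ is compact and no compact subset of $X$ meets infinitely many $Y_n$; (2) for each $n$, $(r(\phi_{n,m}))_m$ is decreasing and tends to $0$, and $r(\phi_{n,m})\ne0$ for all $n,m$. *)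

theory Defs
  imports "HOL-Analysis.Analysis"
begin

text \<open>The ambient space X is the whole type 'a, with metric d = dist.\<close>

definition Polish_topology :: "'b topology \<Rightarrow> bool" where
  "Polish_topology T \<longleftrightarrow> separable_space T \<and> completely_metrizable_space T"

definition rel_boundary :: "'a::topological_space set \<Rightarrow> 'a set" where
  "rel_boundary Y = Y \<inter> closure (UNIV - Y)"

definition Homeo_boundary :: "'a::topological_space set \<Rightarrow> ('a \<Rightarrow> 'a) set" where
  "Homeo_boundary Y = {\<phi>. (\<exists>\<psi>. homeomorphism Y Y \<phi> \<psi>) \<and> (\<forall>x\<in>rel_boundary Y. \<phi> x = x)}"

definition ext_id :: "'a set \<Rightarrow> ('a \<Rightarrow> 'a) \<Rightarrow> 'a \<Rightarrow> 'a" where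
  "ext_id Y \<phi> x = (if x \<in> Y then \<phi> x else x)"

definition radius :: "'a::metric_space set \<Rightarrow> ('a \<Rightarrow> 'a) \<Rightarrow> real" where
  "radius Y \<phi> = (SUP x. dist x (ext_id Y \<phi> x))"

definition flexible :: "'a::metric_space itself \<Rightarrow> bool" where
  "flexible _ \<longleftrightarrow>
     locally_compact_space (euclidean :: 'a topology) \<and>
     \<not> compact (UNIV :: 'a set) \<and>
     Polish_topology (euclidean :: 'a topology) \<and>
     (\<exists>(Y :: nat \<Rightarrow> 'a set) (\<phi> :: nat \<Rightarrow> nat \<Rightarrow> 'a \<Rightarrow> 'a).
        (\<forall>n m. n \<noteq> m \<longrightarrow> Y n \<inter> Y m = {}) \<and>
        (\<forall>n. compact (Y n)) \<and>
        (\<forall>K. compact K \<longrightarrow> finite {n. K \<inter> Y n \<noteq> {}}) \<and>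
        (\<forall>n m. \<phi> n m \<in> Homeo_boundary (Y n)) \<and>
        (\<forall>n. decseq (\<lambda>m. radius (Y n) (\<phi> n m))) \<and>
        (\<forall>n. (\<lambda>m. radius (Y n) (\<phi> n m)) \<longlonglongrightarrow> 0) \<and>
        (\<forall>n m. radius (Y n) (\<phi> n m) \<noteq> 0))"

text \<open>U (with the subspace topology) is a topological manifold of dimension k:
  every point has an open neighbourhood in U homeomorphic to an open subset of R^k.
  (Hausdorffness and second countability are automatic for subspaces of a separable
  metric space.)\<close>
definition topological_manifold_of_dim :: "'a::topological_space set \<Rightarrow> nat \<Rightarrow> bool" where
  "topological_manifold_of_dim U k \<longleftrightarrow>
     (\<forall>x\<in>U. \<exists>V W. openin (top_of_set U) V \<and> x \<in> V \<and>
        openin (Euclidean_space k) W \<and> top_of_set V homeomorphic_space subtopology (Euclidean_space k) W)"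

end

theory Submission
  imports Defs "HOL-Homology.Invariance_of_Domain"
begin

text \<open>In a chart around a point of a manifold of dimension k \<ge> 1, take a closed coordinate
  cube Y. Shifting the first coordinate by a small tent function supported in a tiny open cube
  around the centre is a homeomorphism of Y that fixes its boundary and moves the centre; read
  through the chart, its radius is positive and as small as we like. Choosing such cubes Y n
  inside U n and within distance 1/(n+1) of x n makes them pairwise disjoint, and locally finite
  because x has no accumulation point. A noncompact second-countable manifold is locally compact
  and Polish, and Bolzano-Weierstrass gives it a closed discrete sequence with pairwise disjoint
  ball neighbourhoods, so it falls under the first case.\<close>

section \<open>Coordinate cubes\<close>

lemma Euclidean_space_eq_top_of_set:
  "Euclidean_space k = top_of_set (topspace (Euclidean_space k))"
  by (simp add: Euclidean_space_def euclidean_product_topology)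

definition cube :: "nat \<Rightarrow> (nat \<Rightarrow> real) \<Rightarrow> real \<Rightarrow> (nat \<Rightarrow> real) set" where
  "cube k c s = {y. (\<forall>i<k. \<bar>y i - c i\<bar> \<le> s) \<and> (\<forall>i\<ge>k. y i = 0)}"

definition ocube :: "nat \<Rightarrow> (nat \<Rightarrow> real) \<Rightarrow> real \<Rightarrow> (nat \<Rightarrow> real) set" where
  "ocube k c s = {y. (\<forall>i<k. \<bar>y i - c i\<bar> < s) \<and> (\<forall>i\<ge>k. y i = 0)}"

lemma ocube_subset_cube: "ocube k c s \<subseteq> cube k c s"
  by (auto simp: ocube_def cube_def)

lemma cube_mono: "s \<le> s' \<Longrightarrow> cube k c s \<subseteq> cube k c s'"
  by (auto simp: cube_def)

lemma cube_subset_Euclidean_space: "cube k c s \<subseteq> topspace (Euclidean_space k)"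
  by (auto simp: cube_def topspace_Euclidean_space)

lemma center_in_ocube:
  "c \<in> topspace (Euclidean_space k) \<Longrightarrow> 0 < s \<Longrightarrow> c \<in> ocube k c s"
  by (auto simp: ocube_def topspace_Euclidean_space)

lemma compact_cube: "compact (cube k c s)"
proof -
  define I where "I i = (if i < k then {c i - s..c i + s} else {0})" for i
  have "cube k c s = PiE UNIV I"
  proof (rule Set.set_eqI)
    fix y
    have "(i < k \<longrightarrow> \<bar>y i - c i\<bar> \<le> s) \<and> (\<not> i < k \<longrightarrow> y i = 0) \<longleftrightarrow> y i \<in> I i" for i
      by (cases "i < k") (auto simp: I_def abs_le_iff)
    moreover have "y \<in> cube k c s \<longleftrightarrow> (\<forall>i. (i < k \<longrightarrow> \<bar>y i - c i\<bar> \<le> s) \<and> (\<not> i < k \<longrightarrow> y i = 0))"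
      unfolding cube_def by (auto simp: not_less)
    ultimately show "y \<in> cube k c s \<longleftrightarrow> y \<in> PiE UNIV I"
      by (simp add: PiE_iff)
  qed
  moreover have "compactin (powertop_real UNIV) (PiE UNIV I)"
    by (subst compactin_PiE) (auto simp: I_def)
  ultimately show ?thesis
    by (simp add: euclidean_product_topology)
qed

lemma openin_Euclidean_space_ocube: "openin (Euclidean_space k) (ocube k c s)"
proof -
  have "open {y::nat \<Rightarrow> real. \<forall>i\<in>{..<k}. y (id i) \<in> ball (c i) s}"
    by (rule product_topology_basis') auto
  moreover have "ocube k c s = topspace (Euclidean_space k) \<inter> {y. \<forall>i\<in>{..<k}. y (id i) \<in> ball (c i) s}"
    by (auto simp: ocube_def topspace_Euclidean_space dist_real_def abs_minus_commute)
  ultimately show ?thesis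
    by (subst Euclidean_space_eq_top_of_set) (auto simp: openin_open)
qed

lemma cube_subset_open:
  assumes "open B" "c \<in> B" "c \<in> topspace (Euclidean_space k)"
  obtains s where "0 < s" "cube k c s \<subseteq> B"
proof -
  obtain r where r: "r > 0" "ball c r \<subseteq> B"
    using assms open_contains_ball by blast
  obtain N where N: "(1/2::real) ^ N < r/2"
    using real_arch_pow_inv[of "r/2" "1/2"] r by auto
  \<comment> \<open>the metric of \<open>nat \<Rightarrow> real\<close> sees only the first N coordinates, up to an error 2^-N\<close>
  have "cube k c (r/8) \<subseteq> ball c r"
  proof
    fix y assume y: "y \<in> cube k c (r/8)"
    have "dist (y i) (c i) \<le> r/8" for i
      using y r assms(3) by (cases "i < k") (auto simp: cube_def dist_real_def topspace_Euclidean_space)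
    then have "Max {dist (y (from_nat n)) (c (from_nat n)) |n. n \<le> N} \<le> r/8"
      by (subst Max_le_iff) force+
    moreover have "dist y c \<le> 2 * Max {dist (y (from_nat n)) (c (from_nat n)) |n. n \<le> N} + (1/2) ^ N"
      by (rule dist_fun_le_dist_first_terms)
    ultimately show "y \<in> ball c r"
      using N r by (simp add: dist_commute)
  qed
  with r that[of "r/8"] show thesis
    by auto
qed

section \<open>A push supported in a cube\<close>

text \<open>The push shifts the first coordinate by a tent function supported in the open cube
  of radius s. Its slope in the first coordinate is at most 1/2, so the shift is strictly
  increasing there; this gives injectivity and, since the faces of every larger cube stay fixed,
  surjectivity onto that cube by the intermediate value theorem.\<close>

definition cube_bump :: "nat \<Rightarrow> (nat \<Rightarrow> real) \<Rightarrow> real \<Rightarrow> (nat \<Rightarrow> real) \<Rightarrow> real" where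
  "cube_bump k c s y = (\<Prod>i\<in>{1..<k}. max 0 (1 - \<bar>y i - c i\<bar> / s))"

definition push :: "nat \<Rightarrow> (nat \<Rightarrow> real) \<Rightarrow> real \<Rightarrow> (nat \<Rightarrow> real) \<Rightarrow> (nat \<Rightarrow> real)" where
  "push k c s y = y(0 := y 0 + cube_bump k c s y / 2 * max 0 (s - \<bar>y 0 - c 0\<bar>))"

lemma cube_bump_bounds:
  assumes "0 < s"
  shows "0 \<le> cube_bump k c s y" "cube_bump k c s y \<le> 1"
  using assms unfolding cube_bump_def by (auto intro!: prod_nonneg prod_le_1)

lemma cube_bump_cong: "(\<And>i. 1 \<le> i \<Longrightarrow> y i = z i) \<Longrightarrow> cube_bump k c s y = cube_bump k c s z"
  unfolding cube_bump_def by (intro prod.cong) auto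

lemma continuous_on_push:
  assumes "0 < s"
  shows "continuous_on S (push k c s)"
proof (rule continuous_on_coordinatewise_then_product)
  have coord: "continuous_on S (\<lambda>y::nat \<Rightarrow> real. y i)" for i
    by (rule continuous_on_subset[OF continuous_on_product_coordinates]) simp
  show "continuous_on S (\<lambda>y. push k c s y i)" for i
    using assms unfolding push_def cube_bump_def by (cases "i = 0") (auto intro!: continuous_intros coord)
qed

lemma strict_mono_add_tent:
  fixes b s a u v :: real
  assumes "0 \<le> b" "b \<le> 1/2" "u < v"
  shows "u + b * max 0 (s - \<bar>u - a\<bar>) < v + b * max 0 (s - \<bar>v - a\<bar>)"
proof -
  have "max 0 (s - \<bar>u - a\<bar>) - max 0 (s - \<bar>v - a\<bar>) \<le> v - u"
    using abs_triangle_ineq3[of "v - a" "u - a"] assms by (simp add: max_def) linarith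
  then have "b * (max 0 (s - \<bar>u - a\<bar>) - max 0 (s - \<bar>v - a\<bar>)) \<le> b * (v - u)"
    using assms(1) by (rule mult_left_mono)
  moreover have "b * (v - u) < v - u"
    using assms by (simp add: mult_less_cancel_right1)
  ultimately show ?thesis
    by (simp add: algebra_simps)
qed

lemma inj_push:
  assumes "0 < s"
  shows "inj (push k c s)"
proof (rule injI)
  fix y z assume eq: "push k c s y = push k c s z"
  have tail: "y i = z i" if "1 \<le> i" for i
    using fun_cong[OF eq, of i] that by (simp add: push_def)
  define b where "b = cube_bump k c s y / 2"
  have b: "0 \<le> b" "b \<le> 1/2"
    using cube_bump_bounds[OF assms, of k c y] by (auto simp: b_def)
  have "cube_bump k c s z = cube_bump k c s y"
    using tail by (metis cube_bump_cong)
  then have "y 0 + b * max 0 (s - \<bar>y 0 - c 0\<bar>) = z 0 + b * max 0 (s - \<bar>z 0 - c 0\<bar>)"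
    using fun_cong[OF eq, of 0] by (simp add: push_def b_def)
  then have "y 0 = z 0"
    using strict_mono_add_tent[OF b, of "y 0" "z 0" s "c 0"] strict_mono_add_tent[OF b, of "z 0" "y 0" s "c 0"]
    by (metis less_irrefl linorder_neqE_linordered_idom)
  with tail show "y = z"
    by (metis less_one linorder_not_le ext)
qed

lemma push_moves_only_ocube:
  assumes "0 < s" "y \<in> topspace (Euclidean_space k)" "push k c s y \<noteq> y"
  shows "y \<in> ocube k c s"
proof -
  have "push k c s y 0 \<noteq> y 0"
    using assms(3) by (auto simp: push_def fun_eq_iff split: if_splits)
  then have nz: "cube_bump k c s y \<noteq> 0" "max 0 (s - \<bar>y 0 - c 0\<bar>) \<noteq> 0"
    by (auto simp: push_def)
  have "\<bar>y i - c i\<bar> < s" if "i < k" for i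
  proof (cases "i = 0")
    case True
    with nz(2) show ?thesis
      by (auto simp: max_def split: if_splits)
  next
    case False
    then have "max 0 (1 - \<bar>y i - c i\<bar> / s) \<noteq> 0"
      using nz(1) that unfolding cube_bump_def by (simp add: prod_zero_iff)
    then show ?thesis
      using assms(1) by (simp add: max_def field_simps split: if_splits)
  qed
  with assms(2) show ?thesis
    by (simp add: ocube_def topspace_Euclidean_space)
qed

lemma push_moves_center:
  assumes "0 < s"
  shows "push k c s c \<noteq> c"
proof -
  have "push k c s c 0 = c 0 + s / 2"
    using assms by (simp add: push_def cube_bump_def)
  with assms show ?thesis
    by (metis less_add_same_cancel1 half_gt_zero less_irrefl)
qed


lemma add_tent_image_interval:
  fixes a b s s0 :: real
  assumes "0 \<le> b" "b \<le> 1/2" "0 < s" "s \<le> s0"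
  shows "(\<lambda>t. t + b * max 0 (s - \<bar>t - a\<bar>)) ` {a - s0..a + s0} = {a - s0..a + s0}"
    (is "?h ` ?I = ?I")
proof
  have ends: "?h (a - s0) = a - s0" "?h (a + s0) = a + s0"
    using assms by auto
  have mono: "?h u \<le> ?h v" if "u \<le> v" for u v
  proof (cases "u = v")
    case False
    with that show ?thesis
      using strict_mono_add_tent[OF assms(1,2), of u v s a] by simp
  qed simp
  show "?h ` ?I \<subseteq> ?I"
  proof (rule image_subsetI)
    fix t assume t: "t \<in> ?I"
    have "?h (a - s0) \<le> ?h t" "?h t \<le> ?h (a + s0)"
      using t by (intro mono; simp)+
    then show "?h t \<in> ?I"
      by (simp only: ends atLeastAtMost_iff)
  qed
  show "?I \<subseteq> ?h ` ?I"
  proof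
    fix z assume z: "z \<in> ?I"
    have "continuous_on ?I ?h"
      by (intro continuous_intros)
    then obtain t where "t \<in> ?I" "?h t = z"
      using IVT'[of ?h "a - s0" z "a + s0"] z assms(3,4) unfolding ends by auto
    then show "z \<in> ?h ` ?I"
      by blast
  qed
qed

lemma cube_first_coordinate:
  assumes "1 \<le> k" "y \<in> cube k c s"
  shows "y 0 \<in> {c 0 - s..c 0 + s}"
    and "t \<in> {c 0 - s..c 0 + s} \<Longrightarrow> y(0 := t) \<in> cube k c s"
  using assms by (auto simp: cube_def abs_le_iff)

lemma push_image_cube:
  assumes "1 \<le> k" "0 < s" "s \<le> s0"
  shows "push k c s ` cube k c s0 = cube k c s0"
proof -
  define h where "h y t = t + cube_bump k c s y / 2 * max 0 (s - \<bar>t - c 0\<bar>)" for y t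
  have h_image: "h y ` {c 0 - s0..c 0 + s0} = {c 0 - s0..c 0 + s0}" for y
    unfolding h_def using cube_bump_bounds[OF assms(2), of k c y] assms(2,3)
    by (intro add_tent_image_interval) auto
  have push_eq: "push k c s y = y(0 := h y (y 0))" for y
    by (simp add: push_def h_def)
  show ?thesis
  proof
    show "push k c s ` cube k c s0 \<subseteq> cube k c s0"
    proof (rule image_subsetI)
      fix y assume y: "y \<in> cube k c s0"
      have "h y (y 0) \<in> {c 0 - s0..c 0 + s0}"
        using h_image[of y] cube_first_coordinate(1)[OF assms(1) y] by blast
      then show "push k c s y \<in> cube k c s0"
        unfolding push_eq by (rule cube_first_coordinate(2)[OF assms(1) y])
    qed
    show "cube k c s0 \<subseteq> push k c s ` cube k c s0"
    proof
      fix z assume z: "z \<in> cube k c s0"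
      then obtain t where t: "t \<in> {c 0 - s0..c 0 + s0}" "h z t = z 0"
        using h_image cube_first_coordinate(1)[OF assms(1)] by (metis imageE)
      have "cube_bump k c s (z(0 := t)) = cube_bump k c s z"
        by (rule cube_bump_cong) simp
      then have "h (z(0 := t)) = h z"
        by (intro ext) (simp add: h_def)
      then have "push k c s (z(0 := t)) = z"
        using t(2) by (simp add: push_eq)
      moreover have "z(0 := t) \<in> cube k c s0"
        using z t(1) by (rule cube_first_coordinate(2)[OF assms(1)])
      ultimately show "z \<in> push k c s ` cube k c s0"
        by (metis image_eqI)
    qed
  qed
qed


lemma homeomorphism_push:
  assumes "1 \<le> k" "0 < s" "s \<le> s0"
  obtains \<psi> where "homeomorphism (cube k c s0) (cube k c s0) (push k c s) \<psi>"
  using homeomorphism_compact[OF compact_cube continuous_on_push[OF assms(2)]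
      push_image_cube[OF assms] inj_on_subset[OF inj_push[OF assms(2)] subset_UNIV]] that
  by blast

section \<open>Boundary-fixing homeomorphisms of small radius\<close>

definition has_small_homeos :: "'a::metric_space set \<Rightarrow> bool" where
  "has_small_homeos Y \<longleftrightarrow> (\<forall>\<delta>>0. \<exists>\<phi>\<in>Homeo_boundary Y. 0 < radius Y \<phi> \<and> radius Y \<phi> < \<delta>)"

lemma Homeo_boundary_if_moves_only_interior:
  assumes "homeomorphism Y Y \<phi> \<psi>" "\<And>y. y \<in> Y \<Longrightarrow> \<phi> y \<noteq> y \<Longrightarrow> y \<in> interior Y"
  shows "\<phi> \<in> Homeo_boundary Y"
  using assms unfolding Homeo_boundary_def rel_boundary_def
  by (auto simp: Compl_eq_Diff_UNIV [symmetric] closure_complement)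

lemma radius_bounds:
  fixes Y :: "'a::metric_space set"
  assumes "\<And>y. y \<in> Y \<Longrightarrow> dist y (\<phi> y) \<le> B" "p \<in> Y" "\<phi> p \<noteq> p"
  shows "0 < radius Y \<phi>" "radius Y \<phi> \<le> B"
proof -
  have moved: "0 < dist p (ext_id Y \<phi> p)"
    using assms(2,3) by (simp add: ext_id_def)
  have "0 \<le> B"
    using assms(1)[OF assms(2)] zero_le_dist order_trans by blast
  then have bound: "dist x (ext_id Y \<phi> x) \<le> B" for x
    using assms(1) by (cases "x \<in> Y") (auto simp: ext_id_def)
  then have "bdd_above (range (\<lambda>x. dist x (ext_id Y \<phi> x)))"
    by (intro bdd_aboveI2)
  then have "dist p (ext_id Y \<phi> p) \<le> radius Y \<phi>"
    unfolding radius_def by (rule cSUP_upper[OF UNIV_I])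
  with moved show "0 < radius Y \<phi>"
    by linarith
  show "radius Y \<phi> \<le> B"
    unfolding radius_def by (rule cSUP_least) (auto intro: bound)
qed

lemma obtain_decseq_tendsto_0:
  fixes r :: "'b \<Rightarrow> real"
  assumes "\<forall>\<delta>>0. \<exists>a\<in>S. 0 < r a \<and> r a < \<delta>"
  obtains f where "\<And>m. f m \<in> S" "\<And>m. 0 < r (f m)" "decseq (\<lambda>m. r (f m))" "(\<lambda>m. r (f m)) \<longlonglongrightarrow> 0"
proof -
  define P where "P n a \<longleftrightarrow> a \<in> S \<and> 0 < r a \<and> r a < inverse (real (Suc n))" for n a
  have "\<exists>f. \<forall>n. P n (f n) \<and> r (f (Suc n)) \<le> r (f n)"
  proof (rule dependent_nat_choice)
    show "\<exists>a. P 0 a"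
      using assms[rule_format, of 1] by (auto simp: P_def)
  next
    fix a n assume "P n a"
    then have "0 < min (r a) (inverse (real (Suc (Suc n))))"
      by (simp add: P_def)
    then obtain b where "b \<in> S" "0 < r b" "r b < min (r a) (inverse (real (Suc (Suc n))))"
      using assms by blast
    then show "\<exists>b. P (Suc n) b \<and> r b \<le> r a"
      unfolding P_def by auto
  qed
  then obtain f where f: "\<And>n. P n (f n)" "\<And>n. r (f (Suc n)) \<le> r (f n)"
    by blast
  have lim: "(\<lambda>m. r (f m)) \<longlonglongrightarrow> 0"
  proof (rule tendsto_sandwich[OF _ _ tendsto_const LIMSEQ_inverse_real_of_nat])
    show "\<forall>\<^sub>F n in sequentially. 0 \<le> r (f n)" "\<forall>\<^sub>F n in sequentially. r (f n) \<le> inverse (real (Suc n))"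
      using f(1) by (simp_all add: P_def less_imp_le)
  qed
  show thesis
  proof (rule that)
    show "decseq (\<lambda>m. r (f m))"
      using f(2) by (simp add: decseq_Suc_iff)
  qed (use f(1) lim in \<open>auto simp: P_def\<close>)
qed

lemma has_small_homeos_sequence:
  assumes "has_small_homeos Y"
  shows "\<exists>f. (\<forall>m. f m \<in> Homeo_boundary Y) \<and> decseq (\<lambda>m. radius Y (f m)) \<and>
    (\<lambda>m. radius Y (f m)) \<longlonglongrightarrow> 0 \<and> (\<forall>m. radius Y (f m) \<noteq> 0)"
proof -
  obtain f where f: "\<And>m. f m \<in> Homeo_boundary Y" "\<And>m. 0 < radius Y (f m)"
    "decseq (\<lambda>m. radius Y (f m))" "(\<lambda>m. radius Y (f m)) \<longlonglongrightarrow> 0"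
    using obtain_decseq_tendsto_0[OF assms[unfolded has_small_homeos_def]] by blast
  moreover have "radius Y (f m) \<noteq> 0" for m
    using f(2)[of m] by linarith
  ultimately show ?thesis
    by blast
qed

locale Euclidean_chart =
  fixes V :: "'a::metric_space set" and W :: "(nat \<Rightarrow> real) set" and h g and k :: nat
  assumes homeo: "homeomorphism V W h g" and open_domain: "open V"
    and openin_range: "openin (Euclidean_space k) W"
begin

lemma range_subset: "W \<subseteq> topspace (Euclidean_space k)"
  using openin_range by (rule openin_subset)

lemma open_image:
  assumes "openin (Euclidean_space k) S" "S \<subseteq> W"
  shows "open (g ` S)"
proof -
  have "openin (top_of_set W) S"
    using assms range_subset by (metis Euclidean_space_eq_top_of_set openin_subset_trans)
  then have "openin (top_of_set V) (g ` S)"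
    using homeomorphism_imp_open_map[OF homeomorphism_symD[OF homeo]] by blast
  with open_domain show ?thesis
    using openin_open_trans by blast
qed

lemma homeomorphism_cube:
  "cube k c s \<subseteq> W \<Longrightarrow> homeomorphism (cube k c s) (g ` cube k c s) g h"
  using homeomorphism_of_subsets[OF homeomorphism_symD[OF homeo] _ order_refl] by blast

lemma ocube_subset_interior:
  assumes "cube k c s \<subseteq> W"
  shows "g ` ocube k c s \<subseteq> interior (g ` cube k c s)"
proof (rule interior_maximal)
  show "g ` ocube k c s \<subseteq> g ` cube k c s"
    using ocube_subset_cube by blast
  show "open (g ` ocube k c s)"
    using open_image[OF openin_Euclidean_space_ocube] ocube_subset_cube assms by blast
qed

lemma small_cube:
  assumes "c \<in> W" "open B" "g c \<in> B"
  obtains s where "0 < s" "cube k c s \<subseteq> W" "g ` cube k c s \<subseteq> B"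
proof -
  have "openin (top_of_set W) (W \<inter> g -` B)"
    using homeo assms(2) homeomorphism_cont2 continuous_openin_preimage_gen by blast
  then have "openin (Euclidean_space k) (W \<inter> g -` B)"
    using openin_range openin_trans Euclidean_space_eq_top_of_set by metis
  then obtain Op where Op: "open Op" "W \<inter> g -` B = topspace (Euclidean_space k) \<inter> Op"
    by (subst (asm) Euclidean_space_eq_top_of_set) (auto simp: openin_open)
  have "c \<in> Op"
    using Op(2) assms(1,3) by blast
  then obtain s where "0 < s" "cube k c s \<subseteq> Op"
    using cube_subset_open[OF Op(1)] assms(1) range_subset by blast
  then have "cube k c s \<subseteq> W \<inter> g -` B"
    using Op(2) cube_subset_Euclidean_space by blast
  with \<open>0 < s\<close> that show thesis
    by blast
qed

lemma transported_push_support: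
  assumes "1 \<le> k" "0 < s" "s \<le> s0" "cube k c s0 \<subseteq> W"
    and "y \<in> g ` cube k c s0" "g (push k c s (h y)) \<noteq> y"
  shows "y \<in> g ` ocube k c s" "g (push k c s (h y)) \<in> g ` cube k c s"
proof -
  note cube = homeomorphism_cube[OF assms(4)]
  have hy: "h y \<in> cube k c s0" "g (h y) = y"
    using homeomorphism_image2[OF cube] homeomorphism_apply2[OF cube] assms(5) by auto
  moreover have "push k c s (h y) \<noteq> h y"
    using assms(6) hy(2) by auto
  ultimately have "h y \<in> ocube k c s"
    using push_moves_only_ocube[OF assms(2)] cube_subset_Euclidean_space by blast
  then show "y \<in> g ` ocube k c s"
    using hy(2) by (metis image_eqI)
  show "g (push k c s (h y)) \<in> g ` cube k c s"
    using push_image_cube[OF assms(1,2) order_refl] ocube_subset_cube \<open>h y \<in> ocube k c s\<close>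
    by blast
qed

lemma transported_push_Homeo_boundary:
  assumes "1 \<le> k" "0 < s" "s \<le> s0" "cube k c s0 \<subseteq> W"
  shows "g \<circ> push k c s \<circ> h \<in> Homeo_boundary (g ` cube k c s0)"
proof -
  note cube = homeomorphism_cube[OF assms(4)]
  obtain \<psi> where "homeomorphism (cube k c s0) (cube k c s0) (push k c s) \<psi>"
    using homeomorphism_push[OF assms(1-3)] .
  then obtain \<psi>' where hom: "homeomorphism (g ` cube k c s0) (g ` cube k c s0) (g \<circ> push k c s \<circ> h) \<psi>'"
    using homeomorphism_compose[OF homeomorphism_symD[OF cube] homeomorphism_compose[OF _ cube]]
    by blast
  show ?thesis
  proof (rule Homeo_boundary_if_moves_only_interior[OF hom])
    fix y assume "y \<in> g ` cube k c s0" "(g \<circ> push k c s \<circ> h) y \<noteq> y"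
    then have "y \<in> g ` ocube k c s"
      using transported_push_support[OF assms] by simp
    also have "\<dots> \<subseteq> interior (g ` cube k c s)"
      using ocube_subset_interior order_trans[OF cube_mono[OF assms(3)] assms(4)] by blast
    also have "\<dots> \<subseteq> interior (g ` cube k c s0)"
      by (intro interior_mono image_mono cube_mono assms(3))
    finally show "y \<in> interior (g ` cube k c s0)" .
  qed
qed

lemma transported_push_moves_center:
  assumes "1 \<le> k" "0 < s" "s \<le> s0" "cube k c s0 \<subseteq> W" "c \<in> W" "0 < s0"
  shows "g (push k c s (h (g c))) \<noteq> g c"
proof -
  have c: "c \<in> cube k c s0"
    using center_in_ocube[OF _ assms(6)] ocube_subset_cube assms(5) range_subset by blast
  then have "push k c s c \<in> cube k c s0"
    using push_image_cube[OF assms(1-3)] by blast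
  then have "h (g (push k c s c)) \<noteq> h (g c)"
    using push_moves_center[OF assms(2)] c homeomorphism_apply1[OF homeomorphism_cube[OF assms(4)]]
    by simp
  then have "g (push k c s c) \<noteq> g c"
    by auto
  then show ?thesis
    using homeomorphism_apply2[OF homeo assms(5)] by simp
qed

lemma cube_has_small_homeos:
  assumes "1 \<le> k" "c \<in> W" "0 < s0" "cube k c s0 \<subseteq> W"
  shows "has_small_homeos (g ` cube k c s0)"
  unfolding has_small_homeos_def
proof (intro allI impI)
  fix \<delta> :: real assume "0 < \<delta>"
  obtain s1 where s1: "0 < s1" "cube k c s1 \<subseteq> W" "g ` cube k c s1 \<subseteq> ball (g c) (\<delta>/4)"
    using small_cube[OF assms(2), of "ball (g c) (\<delta>/4)"] \<open>0 < \<delta>\<close> by auto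
  define s where "s = min s1 s0"
  have s: "0 < s" "s \<le> s0" "g ` cube k c s \<subseteq> ball (g c) (\<delta>/4)"
    using s1 assms(3) cube_mono[of s s1 k c] by (auto simp: s_def)
  define \<phi> where "\<phi> = g \<circ> push k c s \<circ> h"
  have "dist y (\<phi> y) \<le> \<delta>/2" if "y \<in> g ` cube k c s0" for y
  proof (cases "\<phi> y = y")
    case False
    then have "y \<in> g ` ocube k c s" "\<phi> y \<in> g ` cube k c s"
      using transported_push_support[OF assms(1) s(1,2) assms(4) that] by (simp_all add: \<phi>_def)
    with s(3) ocube_subset_cube have "y \<in> ball (g c) (\<delta>/4)" "\<phi> y \<in> ball (g c) (\<delta>/4)"
      by blast+
    then show ?thesis
      using dist_triangle3[of y "\<phi> y" "g c"] by simp
  qed (use \<open>0 < \<delta>\<close> in simp)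
  moreover have "c \<in> cube k c s0"
    using center_in_ocube[OF _ assms(3)] ocube_subset_cube assms(2) range_subset by blast
  then have "g c \<in> g ` cube k c s0"
    by blast
  moreover have "\<phi> (g c) \<noteq> g c"
    using transported_push_moves_center[OF assms(1) s(1,2) assms(4,2,3)] by (simp add: \<phi>_def)
  ultimately have "0 < radius (g ` cube k c s0) \<phi>" "radius (g ` cube k c s0) \<phi> \<le> \<delta>/2"
    using radius_bounds[of "g ` cube k c s0" \<phi> "\<delta>/2" "g c"] by blast+
  moreover have "\<phi> \<in> Homeo_boundary (g ` cube k c s0)"
    unfolding \<phi>_def using transported_push_Homeo_boundary[OF assms(1) s(1,2) assms(4)] .
  ultimately show "\<exists>\<phi>\<in>Homeo_boundary (g ` cube k c s0).
      0 < radius (g ` cube k c s0) \<phi> \<and> radius (g ` cube k c s0) \<phi> < \<delta>"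
    using \<open>0 < \<delta>\<close> by (intro bexI[of _ \<phi>] conjI) auto
qed

end

lemma manifold_chart:
  assumes "open A" "topological_manifold_of_dim A k" "p \<in> A"
  obtains V W h g where "Euclidean_chart V W h g k" "p \<in> V" "V \<subseteq> A"
proof -
  obtain V W where V: "openin (top_of_set A) V" "p \<in> V" and W: "openin (Euclidean_space k) W"
    and hom: "top_of_set V homeomorphic_space subtopology (Euclidean_space k) W"
    using assms(2,3) unfolding topological_manifold_of_dim_def by blast
  have "subtopology (Euclidean_space k) W = top_of_set W"
    using openin_subset[OF W]
    by (subst Euclidean_space_eq_top_of_set) (simp add: subtopology_subtopology Int_absorb1)
  then have "V homeomorphic W"
    using hom by simp
  then obtain h g where "homeomorphism V W h g"
    unfolding homeomorphic_def by blast
  moreover have "open V" "V \<subseteq> A"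
    using V(1) assms(1) openin_open_trans openin_imp_subset by blast+
  ultimately show thesis
    using V(2) W by (intro that Euclidean_chart.intro)
qed

lemma manifold_point_has_small_homeos:
  assumes "open A" "topological_manifold_of_dim A k" "1 \<le> k" "p \<in> A" "open G" "p \<in> G"
  obtains Y where "compact Y" "Y \<subseteq> A \<inter> G" "p \<in> interior Y" "has_small_homeos Y"
proof -
  obtain V W h g where chart: "Euclidean_chart V W h g k" and "p \<in> V" "V \<subseteq> A"
    using manifold_chart[OF assms(1,2,4)] .
  interpret Euclidean_chart V W h g k
    by (rule chart)
  define c where "c = h p"
  have c: "c \<in> W" "g c = p"
    using homeo \<open>p \<in> V\<close> by (auto simp: c_def homeomorphism_def)
  obtain s0 where s0: "0 < s0" "cube k c s0 \<subseteq> W" "g ` cube k c s0 \<subseteq> A \<inter> G"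
    using small_cube[OF c(1), of "A \<inter> G"] assms c(2) \<open>V \<subseteq> A\<close> \<open>p \<in> V\<close> by blast
  have "p \<in> g ` ocube k c s0"
    using c center_in_ocube[OF _ s0(1)] range_subset by blast
  then have "p \<in> interior (g ` cube k c s0)"
    using ocube_subset_interior[OF s0(2)] by blast
  moreover have "compact (g ` cube k c s0)"
    using compact_continuous_image[OF homeomorphism_cont1[OF homeomorphism_cube[OF s0(2)]]]
      compact_cube .
  ultimately show thesis
    using that s0(3) cube_has_small_homeos[OF assms(3) c(1) s0(1,2)] by blast
qed

section \<open>Closed discrete sequences\<close>

lemma not_islimpt_range_if_closed_discrete:
  assumes "closed (range x)" "\<forall>n. \<exists>V. open V \<and> V \<inter> range x = {x n}"
  shows "\<not> z islimpt range x"
proof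
  assume z: "z islimpt range x"
  then obtain n where "z = x n"
    using assms(1) closed_limpt by blast
  moreover obtain V where "open V" "V \<inter> range x = {x n}"
    using assms(2) by blast
  ultimately obtain y where "y \<in> range x" "y \<in> V" "y \<noteq> x n"
    using z by (blast elim: islimptE)
  with \<open>V \<inter> range x = {x n}\<close> show False
    by blast
qed

lemma not_compact_if_discrete_sequence:
  fixes x :: "nat \<Rightarrow> 'a::metric_space"
  assumes "inj x" "\<forall>z. \<not> z islimpt range x"
  shows "\<not> compact (UNIV :: 'a set)"
  using Heine_Borel_imp_Bolzano_Weierstrass[of UNIV "range x"] range_inj_infinite[OF assms(1)] assms(2)
  by blast

lemma discrete_sequence_if_not_compact:
  assumes "\<not> compact (UNIV :: 'a::metric_space set)"
  obtains x :: "nat \<Rightarrow> 'a::metric_space" where "inj x" "\<forall>z. \<not> z islimpt range x"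
proof -
  obtain T :: "'a set" where "infinite T" "\<forall>z. \<not> z islimpt T"
    using assms unfolding compact_eq_Bolzano_Weierstrass by blast
  moreover obtain x :: "nat \<Rightarrow> 'a" where "inj x" "range x \<subseteq> T"
    using infinite_countable_subset[OF \<open>infinite T\<close>] by blast
  ultimately show thesis
    using that islimpt_subset by blast
qed

lemma disjoint_balls_around_discrete_sequence:
  fixes x :: "nat \<Rightarrow> 'a::metric_space"
  assumes "inj x" "\<forall>z. \<not> z islimpt range x"
  obtains e where "\<And>n. 0 < e n" "disjoint_family (\<lambda>n. ball (x n) (e n))"
proof -
  have "\<exists>e>0. \<forall>y\<in>range x. y \<noteq> x n \<longrightarrow> e \<le> dist y (x n)" for n
    using assms(2)[rule_format, of "x n"] unfolding islimpt_approachable by (auto simp: not_less)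
  then obtain e where e: "\<And>n. 0 < e n" "\<And>n y. y \<in> range x \<Longrightarrow> y \<noteq> x n \<Longrightarrow> e n \<le> dist y (x n)"
    by metis
  have "ball (x n) (e n / 2) \<inter> ball (x m) (e m / 2) = {}" if "n \<noteq> m" for n m
  proof (rule ccontr)
    assume "ball (x n) (e n / 2) \<inter> ball (x m) (e m / 2) \<noteq> {}"
    then obtain w where "dist (x n) w < e n / 2" "dist (x m) w < e m / 2"
      by auto
    moreover have "e n \<le> dist (x n) (x m)" "e m \<le> dist (x n) (x m)"
      using e(2)[of "x m" n] e(2)[of "x n" m] injD[OF assms(1)] that by (auto simp: dist_commute)
    moreover have "dist (x n) (x m) \<le> dist (x n) w + dist (x m) w"
      by (rule dist_triangle2)
    ultimately show False
      by linarith
  qed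
  with e(1) that[of "\<lambda>n. e n / 2"] show thesis
    by (simp add: disjoint_family_on_def)
qed

lemma finite_meeting_shrinking_family:
  fixes x :: "nat \<Rightarrow> 'a::metric_space"
  assumes "inj x" "\<forall>z. \<not> z islimpt range x" "disjoint_family Y"
    and "\<And>n. Y n \<subseteq> ball (x n) (inverse (real (Suc n)))" "compact K"
  shows "finite {n. K \<inter> Y n \<noteq> {}}"
proof (rule ccontr)
  define N where "N = {n. K \<inter> Y n \<noteq> {}}"
  assume "infinite {n. K \<inter> Y n \<noteq> {}}"
  then have "infinite N"
    by (simp add: N_def)
  have "\<forall>n\<in>N. \<exists>w. w \<in> K \<inter> Y n"
    by (auto simp: N_def)
  then obtain y where y: "\<forall>n\<in>N. y n \<in> K \<inter> Y n"
    by (rule bchoice [THEN exE])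
  have "inj_on y N"
  proof (rule inj_onI)
    fix a b assume "a \<in> N" "b \<in> N" "y a = y b"
    then have "y a \<in> Y a \<inter> Y b"
      using y by force
    with assms(3) show "a = b"
      by (auto simp: disjoint_family_on_def)
  qed
  then have "infinite (y ` N)"
    using \<open>infinite N\<close> finite_imageD by blast
  moreover have "y ` N \<subseteq> K"
    using y by blast
  ultimately obtain z where z: "z islimpt y ` N"
    using Heine_Borel_imp_Bolzano_Weierstrass[OF assms(5)] by metis
  have "z islimpt range x"
    unfolding islimpt_approachable
  proof (intro allI impI)
    fix e :: real assume "0 < e"
    define M where "M = {n \<in> N. y n \<in> ball z (e/2)}"
    have "infinite (y ` N \<inter> ball z (e/2))"
      using z \<open>0 < e\<close> unfolding islimpt_eq_infinite_ball by simp
    moreover have "y ` N \<inter> ball z (e/2) \<subseteq> y ` M"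
      by (auto simp: M_def)
    ultimately have "infinite M"
      using finite_subset finite_imageI by blast
    obtain n0 where n0: "inverse (real (Suc n0)) < e/2"
      using reals_Archimedean[of "e/2"] \<open>0 < e\<close> by auto
    have "finite ({..<n0} \<union> x -` {z})"
      using finite_vimageI[OF _ assms(1)] by simp
    then have "infinite (M - ({..<n0} \<union> x -` {z}))"
      using \<open>infinite M\<close> by (rule Diff_infinite_finite)
    then obtain n where "n \<in> M - ({..<n0} \<union> x -` {z})"
      using infinite_imp_nonempty by blast
    then have n: "n \<in> M" "n0 \<le> n" "x n \<noteq> z"
      by auto
    have "dist (x n) (y n) < inverse (real (Suc n))"
      using y n(1) assms(4)[of n] by (auto simp: M_def)
    also have "\<dots> \<le> inverse (real (Suc n0))"
      using n(2) by (simp add: le_imp_inverse_le)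
    finally have "dist (x n) z < e"
      using n(1) dist_triangle[of "x n" z "y n"] n0 by (auto simp: M_def dist_commute)
    then show "\<exists>x'\<in>range x. x' \<noteq> z \<and> dist x' z < e"
      using n(3) by blast
  qed
  with assms(2) show False
    by blast
qed

lemma flexible_if_small_homeos_near_discrete_sequence:
  fixes x :: "nat \<Rightarrow> 'a::metric_space" and A :: "nat \<Rightarrow> 'a set"
  assumes "locally_compact_space (euclidean :: 'a topology)" "Polish_topology (euclidean :: 'a topology)"
    and "inj x" "\<forall>z. \<not> z islimpt range x" "disjoint_family A"
    and small: "\<And>n G. open G \<Longrightarrow> x n \<in> G \<Longrightarrow> \<exists>Y. compact Y \<and> Y \<subseteq> A n \<inter> G \<and> has_small_homeos Y"
  shows "flexible TYPE('a)"
proof -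
  have "\<forall>n. \<exists>Y. compact Y \<and> Y \<subseteq> A n \<inter> ball (x n) (inverse (real (Suc n))) \<and> has_small_homeos Y"
  proof
    show "\<exists>Y. compact Y \<and> Y \<subseteq> A n \<inter> ball (x n) (inverse (real (Suc n))) \<and> has_small_homeos Y" for n
      by (rule small) auto
  qed
  then obtain Y where "\<forall>n. compact (Y n) \<and> Y n \<subseteq> A n \<inter> ball (x n) (inverse (real (Suc n))) \<and>
      has_small_homeos (Y n)"
    by (rule choice [THEN exE])
  then have Y: "\<And>n. compact (Y n)" "\<And>n. Y n \<subseteq> A n \<inter> ball (x n) (inverse (real (Suc n)))"
    "\<And>n. has_small_homeos (Y n)"
    by blast+
  have "\<forall>n. \<exists>f. (\<forall>m. f m \<in> Homeo_boundary (Y n)) \<and> decseq (\<lambda>m. radius (Y n) (f m)) \<and>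
      (\<lambda>m. radius (Y n) (f m)) \<longlonglongrightarrow> 0 \<and> (\<forall>m. radius (Y n) (f m) \<noteq> 0)"
    using has_small_homeos_sequence Y(3) by blast
  then obtain \<phi> where \<phi>: "\<forall>n. (\<forall>m. \<phi> n m \<in> Homeo_boundary (Y n)) \<and> decseq (\<lambda>m. radius (Y n) (\<phi> n m)) \<and>
      (\<lambda>m. radius (Y n) (\<phi> n m)) \<longlonglongrightarrow> 0 \<and> (\<forall>m. radius (Y n) (\<phi> n m) \<noteq> 0)"
    by (rule choice [THEN exE])
  have "disjoint_family Y"
    using assms(5) Y(2) unfolding disjoint_family_on_def by blast
  then have "finite {n. K \<inter> Y n \<noteq> {}}" if "compact K" for K
    using finite_meeting_shrinking_family[OF assms(3,4) _ _ that] Y(2) by blast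
  moreover have "\<not> compact (UNIV :: 'a set)"
    using not_compact_if_discrete_sequence[OF assms(3,4)] .
  ultimately show ?thesis
    unfolding flexible_def using assms(1,2) Y(1) \<phi> \<open>disjoint_family Y\<close>
    by (intro conjI exI[of _ Y] exI[of _ \<phi>]) (auto simp: disjoint_family_on_def)
qed

lemma flexible_if_manifold_neighbourhoods:
  fixes x :: "nat \<Rightarrow> 'a::metric_space"
  assumes "locally_compact_space (euclidean :: 'a topology)" "Polish_topology (euclidean :: 'a topology)"
    and "inj x" "closed (range x)" "\<forall>n. \<exists>V. open V \<and> V \<inter> range x = {x n}"
    and "\<forall>n. open (U n) \<and> x n \<in> U n" "\<forall>n m. n \<noteq> m \<longrightarrow> U n \<inter> U m = {}"
    and "\<forall>n. k n \<ge> 1 \<and> topological_manifold_of_dim (U n) (k n)"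
  shows "flexible TYPE('a)"
proof (rule flexible_if_small_homeos_near_discrete_sequence[OF assms(1-3)])
  show "\<forall>z. \<not> z islimpt range x"
    using not_islimpt_range_if_closed_discrete[OF assms(4,5)] by blast
  show "disjoint_family U"
    using assms(7) by (simp add: disjoint_family_on_def)
  fix n and G :: "'a set"
  assume G: "open G" "x n \<in> G"
  have U: "open (U n)" "x n \<in> U n" "1 \<le> k n" "topological_manifold_of_dim (U n) (k n)"
    using assms(6,8) by auto
  obtain Y where "compact Y" "Y \<subseteq> U n \<inter> G" "x n \<in> interior Y" "has_small_homeos Y"
    using manifold_point_has_small_homeos[OF U(1,4,3,2) G] .
  then show "\<exists>Y. compact Y \<and> Y \<subseteq> U n \<inter> G \<and> has_small_homeos Y"
    by blast
qed

lemma flexible_if_noncompact_manifold: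
  assumes "\<not> compact (UNIV :: 'a::metric_space set)" "second_countable (euclidean :: 'a topology)"
    and "1 \<le> k" "topological_manifold_of_dim (UNIV :: 'a set) k"
  shows "flexible TYPE('a)"
proof -
  have small: "\<exists>Y. compact Y \<and> Y \<subseteq> G \<and> p \<in> interior Y \<and> has_small_homeos Y"
    if G: "open G" "p \<in> G" for p :: 'a and G
  proof -
    obtain Y where "compact Y" "Y \<subseteq> UNIV \<inter> G" "p \<in> interior Y" "has_small_homeos Y"
      using manifold_point_has_small_homeos[OF open_UNIV assms(4,3) UNIV_I G] .
    then show ?thesis
      by blast
  qed
  have lc: "locally_compact_space (euclidean :: 'a topology)"
    unfolding locally_compact_space_def
  proof
    fix p :: 'a
    obtain Y where "compact Y" "p \<in> interior Y"
      using small[OF open_UNIV UNIV_I] by blast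
    then show "\<exists>U K. openin euclidean U \<and> compactin euclidean K \<and> p \<in> U \<and> U \<subseteq> K"
      by (intro exI[of _ "interior Y"] exI[of _ Y]) (auto simp: interior_subset)
  qed
  have pol: "Polish_topology (euclidean :: 'a topology)"
    unfolding Polish_topology_def
    using second_countable_imp_separable_space[OF assms(2)]
      locally_compact_imp_completely_metrizable_space[OF metrizable_space_euclidean lc]
    by (rule conjI)
  obtain x :: "nat \<Rightarrow> 'a" where x: "inj x" "\<forall>z. \<not> z islimpt range x"
    using discrete_sequence_if_not_compact[OF assms(1)] by blast
  obtain e where e: "\<And>n. 0 < e n" "disjoint_family (\<lambda>n. ball (x n) (e n))"
    using disjoint_balls_around_discrete_sequence[OF x] by blast
  show ?thesis
  proof (rule flexible_if_small_homeos_near_discrete_sequence[OF lc pol x e(2)])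
    fix n and G :: "'a set"
    assume "open G" "x n \<in> G"
    then have "open (ball (x n) (e n) \<inter> G)" "x n \<in> ball (x n) (e n) \<inter> G"
      using e(1) by auto
    then obtain Y where "compact Y" "Y \<subseteq> ball (x n) (e n) \<inter> G" "has_small_homeos Y"
      using small by blast
    then show "\<exists>Y. compact Y \<and> Y \<subseteq> ball (x n) (e n) \<inter> G \<and> has_small_homeos Y"
      by blast
  qed
qed

theorem mainTheorem8:
  fixes x :: "nat \<Rightarrow> 'a::metric_space"
    and U :: "nat \<Rightarrow> 'a set"
    and k :: "nat \<Rightarrow> nat"
  shows
   "(locally_compact_space (euclidean :: 'a topology) \<and>
     Polish_topology (euclidean :: 'a topology) \<and>
     inj x \<and> closed (range x) \<and>
     (\<forall>n. \<exists>V. open V \<and> V \<inter> range x = {x n}) \<and>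
     (\<forall>n. open (U n) \<and> x n \<in> U n) \<and>
     (\<forall>n m. n \<noteq> m \<longrightarrow> U n \<inter> U m = {}) \<and>
     (\<forall>n. k n \<ge> 1 \<and> topological_manifold_of_dim (U n) (k n))
     \<longrightarrow> flexible TYPE('a))
    \<and>
    (\<forall>d::nat. \<not> compact (UNIV :: 'a set) \<and>
     second_countable (euclidean :: 'a topology) \<and>
     d \<ge> 1 \<and> topological_manifold_of_dim (UNIV :: 'a set) d
     \<longrightarrow> flexible TYPE('a))"
  using flexible_if_manifold_neighbourhoods[of x U k] flexible_if_noncompact_manifold
  by blast

end
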